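(* Let $X$ be an irreducible positive recurrent Markov chain on a countable state space $S$ with transition matrix $P$ and stationary distribution $\pi$. Fix a finite nonempty set $K\subseteq S$ and a sequence $(A_n:n\ge1)$ of finite subsets of $S$ with $A_n\supseteq K$ and $A_n\nearrow S$. For each $n$, with $T_n=\inf\{j\ge1:X_j\notin A_n\}$, let $G_n(x,y)=P_x(X_{T_K}=y,\,T_K<T_n)$ for $x,y\in K$, and assume $G_n$ is irreducible. Define two stochastic matrices on $K$: (1) (Perron–Frobenius) Let $\lambda_n>0$ be the Perron eigenvalue of $G_n$ with positive left and right eigenvectors $\nu_n,h_n$ normalized so that $\sum_{x\in K}\nu_n(x)h_n(x)=1$; set $P_{1,n}(x,y)=G_n(x,y)h_n(y)/(\lambda_n h_n(x))$, whose unique stationary distribution is $\pi_{1,n}(x)=\nu_n(x)h_n(x)$. (2) (Row normalization) Set $P_{2,n}(x,y)=G_n(x,y)/\sum_{y'\in K}G_n(x,y')$, with unique stationary distribution $\pi_{2,n}$. For a non-negative function $r:S\to[0,\infty)$ and $i=1,2$ define $$\tilde\pi_{i,n}(r)=\frac{E_{\pi_{i,n}}\sum_{j=0}^{(T_n\wedge T_K)-1}r(X_j)}{E_{\pi_{i,n}}(T_n\wedge T_K)}.$$ Then $\tilde\pi_{i,n}(r)\to\pi r=\sum_{x\in S}\pi(x)r(x)$ as $n\to\infty$, for $i=1,2$.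
   Context: $P_x,E_x$ denote probability and expectation for the chain started at $x$, and $E_\mu=\sum_x\mu(x)E_x$. $T_K=\inf\{j\ge1:X_j\in K\}$, and $a\wedge b=\min(a,b)$. *)

theory Defs
  imports "HOL-Analysis.Analysis"
begin

text \<open>Markov chain with transition matrix P on a countable type. 
  kp P B j x y = P_x(X_1,...,X_j \<in> B, X_j = y)  (for j = 0: indicator x = y).\<close>
fun kp :: "('a \<Rightarrow> 'a \<Rightarrow> real) \<Rightarrow> 'a set \<Rightarrow> nat \<Rightarrow> 'a \<Rightarrow> 'a \<Rightarrow> ennreal" where
  "kp P B 0 x y = (if x = y then 1 else 0)"
| "kp P B (Suc j) x y =
     (\<integral>\<^sup>+ z. kp P B j x z * ennreal (P z y) \<partial>count_space UNIV) * indicator B y"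

definition stochastic_matrix :: "('a \<Rightarrow> 'a \<Rightarrow> real) \<Rightarrow> bool" where
  "stochastic_matrix P \<longleftrightarrow> (\<forall>x y. 0 \<le> P x y) \<and> (\<forall>x. (P x has_sum 1) UNIV)"

definition irreducible_chain :: "('a \<Rightarrow> 'a \<Rightarrow> real) \<Rightarrow> bool" where
  "irreducible_chain P \<longleftrightarrow> (\<forall>x y. \<exists>j. kp P UNIV j x y > 0)"

text \<open>E_x T_x = sum_{j \<ge> 0} P_x(T_x > j) with T_x = inf{j \<ge> 1. X_j = x}.\<close>
definition exp_return_time :: "('a \<Rightarrow> 'a \<Rightarrow> real) \<Rightarrow> 'a \<Rightarrow> ennreal" where
  "exp_return_time P x = (\<Sum>j. \<integral>\<^sup>+ y. kp P (- {x}) j x y \<partial>count_space UNIV)"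

definition positive_recurrent :: "('a \<Rightarrow> 'a \<Rightarrow> real) \<Rightarrow> bool" where
  "positive_recurrent P \<longleftrightarrow> (\<forall>x. exp_return_time P x < \<infinity>)"

definition stationary_dist :: "('a \<Rightarrow> 'a \<Rightarrow> real) \<Rightarrow> ('a \<Rightarrow> real) \<Rightarrow> bool" where
  "stationary_dist P \<pi> \<longleftrightarrow> (\<forall>x. 0 \<le> \<pi> x) \<and> (\<pi> has_sum 1) UNIV \<and>
     (\<forall>y. ((\<lambda>x. \<pi> x * P x y) has_sum \<pi> y) UNIV)"

text \<open>G_n(x,y) = P_x(X_{T_K} = y, T_K < T_n), for y \<in> K \<subseteq> A:
  sum over m of P_x(X_1..X_m \<in> A - K, X_{m+1} = y).\<close>
definition hit_matrix :: "('a \<Rightarrow> 'a \<Rightarrow> real) \<Rightarrow> 'a set \<Rightarrow> 'a set \<Rightarrow> 'a \<Rightarrow> 'a \<Rightarrow> real" where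
  "hit_matrix P A K x y =
     enn2real (\<Sum>m. \<integral>\<^sup>+ z. kp P (A - K) m x z * ennreal (P z y) \<partial>count_space UNIV)"

text \<open>E_x sum_{j=0}^{(T_A \<and> T_K) - 1} r(X_j) = sum_j E_x[r(X_j); X_1..X_j \<in> A - K].\<close>
definition killed_reward :: "('a \<Rightarrow> 'a \<Rightarrow> real) \<Rightarrow> 'a set \<Rightarrow> 'a set \<Rightarrow> ('a \<Rightarrow> real) \<Rightarrow> 'a \<Rightarrow> ennreal" where
  "killed_reward P A K r x =
     (\<Sum>j. \<integral>\<^sup>+ z. kp P (A - K) j x z * ennreal (r z) \<partial>count_space UNIV)"

definition killed_time :: "('a \<Rightarrow> 'a \<Rightarrow> real) \<Rightarrow> 'a set \<Rightarrow> 'a set \<Rightarrow> 'a \<Rightarrow> ennreal" where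
  "killed_time P A K x = killed_reward P A K (\<lambda>_. 1) x"

definition tilde_pi ::
  "('a \<Rightarrow> 'a \<Rightarrow> real) \<Rightarrow> 'a set \<Rightarrow> 'a set \<Rightarrow> ('a \<Rightarrow> real) \<Rightarrow> ('a \<Rightarrow> real) \<Rightarrow> ennreal" where
  "tilde_pi P A K \<mu> r =
     (\<Sum>x\<in>K. ennreal (\<mu> x) * killed_reward P A K r x) /
     (\<Sum>x\<in>K. ennreal (\<mu> x) * killed_time P A K x)"

fun mpow :: "'a set \<Rightarrow> ('a \<Rightarrow> 'a \<Rightarrow> real) \<Rightarrow> nat \<Rightarrow> 'a \<Rightarrow> 'a \<Rightarrow> real" where
  "mpow K G 0 x y = (if x = y then 1 else 0)"
| "mpow K G (Suc m) x y = (\<Sum>z\<in>K. mpow K G m x z * G z y)"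

definition irreducible_on :: "'a set \<Rightarrow> ('a \<Rightarrow> 'a \<Rightarrow> real) \<Rightarrow> bool" where
  "irreducible_on K G \<longleftrightarrow> (\<forall>x\<in>K. \<forall>y\<in>K. (\<forall>z\<in>K. 0 \<le> G x z) \<and> (\<exists>m. mpow K G (Suc m) x y > 0))"

definition row_normalize :: "'a set \<Rightarrow> ('a \<Rightarrow> 'a \<Rightarrow> real) \<Rightarrow> 'a \<Rightarrow> 'a \<Rightarrow> real" where
  "row_normalize K G x y = G x y / (\<Sum>y'\<in>K. G x y')"

definition stationary_on :: "'a set \<Rightarrow> ('a \<Rightarrow> 'a \<Rightarrow> real) \<Rightarrow> ('a \<Rightarrow> real) \<Rightarrow> bool" where
  "stationary_on K Q p \<longleftrightarrow> (\<forall>x\<in>K. 0 \<le> p x) \<and> (\<Sum>x\<in>K. p x) = 1 \<and>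
     (\<forall>y\<in>K. (\<Sum>x\<in>K. p x * Q x y) = p y)"

end

(* The cycle formula of regeneration theory: started from pi restricted to K and run up to the
   return time T_K, the chain has expected occupation measure pi. Hence the trace matrix
   G(x,y) = P_x(X_{T_K} = y) is stochastic on K with stationary distribution pi normalised on K,
   and the pi-weighted averages over K of E_x sum_{j < T_K} r(X_j) and of E_x T_K are pi r and 1.
   As A_n increases to S, monotone convergence gives G_n -> G together with convergence of the
   killed sums in numerator and denominator. Both P_{1,n} and P_{2,n} tend to the irreducible
   stochastic matrix G: for P_{2,n} because the row sums of G_n tend to 1, for P_{1,n} because
   lambda_n is an average of these row sums and the normalised h_n can only accumulate at
   G-harmonic, hence constant, vectors. Compactness and uniqueness of the stationary distribution
   of G then give pi_{i,n} -> pi / pi(K) on K, and the ratio tends to pi r. *)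

theory Submission
  imports Defs
begin

section \<open>Killed occupation sums\<close>

lemma nn_integral_count_space_has_sum:
  fixes f :: "'b \<Rightarrow> real"
  assumes "(f has_sum s) A" "\<And>x. x \<in> A \<Longrightarrow> 0 \<le> f x"
  shows "(\<integral>\<^sup>+x. ennreal (f x) \<partial>count_space A) = ennreal s"
proof -
  have sum: "f summable_on A" "infsum f A = s"
    using assms(1) has_sum_iff by blast+
  then have "Infinite_Sum.abs_summable_on f A"
    using assms(2) summable_on_iff_abs_summable_on_real
    by (metis (no_types, lifting) real_norm_def abs_of_nonneg summable_on_cong)
  then have abs: "Infinite_Set_Sum.abs_summable_on f A"
    using abs_summable_equivalent by blast
  then show ?thesis
    using nn_integral_conv_infsetsum[of f A] infsetsum_infsum[OF abs] assms(2) sum(2) by simp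
qed

lemma nn_integral_count_space_ge_point:
  "f x \<le> (\<integral>\<^sup>+u. f u \<partial>count_space UNIV)"
proof -
  have "f x = (\<integral>\<^sup>+u. f u * indicator {x} u \<partial>count_space UNIV)" by simp
  also have "\<dots> \<le> (\<integral>\<^sup>+u. f u \<partial>count_space UNIV)"
    by (intro nn_integral_mono) (auto simp: indicator_def)
  finally show ?thesis .
qed

lemma nn_integral_count_space_delta [simp]:
  "(\<integral>\<^sup>+u. f u * (if u = x then 1 else 0) \<partial>count_space UNIV) = f x"
proof -
  have "(\<integral>\<^sup>+u. f u * (if u = x then 1 else 0) \<partial>count_space UNIV) =
        (\<integral>\<^sup>+u. f u * indicator {x} u \<partial>count_space UNIV)"
    by (intro nn_integral_cong) (auto simp: indicator_def)
  then show ?thesis by simp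
qed

lemma nn_integral_count_space_swap:
  fixes f :: "'a::countable \<Rightarrow> 'b::countable \<Rightarrow> ennreal"
  shows "(\<integral>\<^sup>+x. (\<integral>\<^sup>+y. f x y \<partial>count_space UNIV) \<partial>count_space UNIV) =
         (\<integral>\<^sup>+y. (\<integral>\<^sup>+x. f x y \<partial>count_space UNIV) \<partial>count_space UNIV)"
  by (rule nn_integral_count_space_nn_integral) auto

lemma suminf_nn_integral_tendsto_incseq:
  fixes F :: "nat \<Rightarrow> nat \<Rightarrow> 'a \<Rightarrow> ennreal"
  assumes "\<And>j z. incseq (\<lambda>n. F n j z)" and "\<And>j z. (\<lambda>n. F n j z) \<longlonglongrightarrow> F' j z"
  shows "(\<lambda>n. \<Sum>j. \<integral>\<^sup>+z. F n j z \<partial>count_space UNIV) \<longlonglongrightarrow> (\<Sum>j. \<integral>\<^sup>+z. F' j z \<partial>count_space UNIV)"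
proof -
  have "(\<lambda>n. \<integral>\<^sup>+j. (\<integral>\<^sup>+z. F n j z \<partial>count_space UNIV) \<partial>count_space UNIV) \<longlonglongrightarrow>
        (\<integral>\<^sup>+j. (\<integral>\<^sup>+z. F' j z \<partial>count_space UNIV) \<partial>count_space UNIV)"
  proof (rule nn_integral_LIMSEQ)
    show "incseq (\<lambda>n j. \<integral>\<^sup>+z. F n j z \<partial>count_space UNIV)"
      using assms(1) by (auto simp: incseq_def le_fun_def intro!: nn_integral_mono)
    show "(\<lambda>n. \<integral>\<^sup>+z. F n j z \<partial>count_space UNIV) \<longlonglongrightarrow> (\<integral>\<^sup>+z. F' j z \<partial>count_space UNIV)" for j
      by (rule nn_integral_LIMSEQ) (use assms in \<open>auto simp: incseq_def le_fun_def\<close>)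
  qed auto
  then show ?thesis by (simp add: nn_integral_count_space_nat)
qed

lemma stochastic_row_nn_integral:
  assumes "stochastic_matrix P"
  shows "(\<integral>\<^sup>+y. ennreal (P z y) \<partial>count_space UNIV) = 1"
  using assms nn_integral_count_space_has_sum[where f="P z" and s=1 and A=UNIV]
  by (simp add: stochastic_matrix_def)

lemma kp_mono_set:
  assumes "B \<subseteq> B'"
  shows "kp P B j x y \<le> kp P B' j x y"
proof (induction j arbitrary: y)
  case (Suc j)
  have "(\<integral>\<^sup>+ z. kp P B j x z * ennreal (P z y) \<partial>count_space UNIV) \<le>
        (\<integral>\<^sup>+ z. kp P B' j x z * ennreal (P z y) \<partial>count_space UNIV)"
    by (intro nn_integral_mono mult_right_mono Suc) auto
  moreover have "indicator B y \<le> (indicator B' y :: ennreal)"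
    using assms by (auto simp: indicator_def)
  ultimately show ?case by (simp add: mult_mono)
qed simp

lemma kp_tendsto_Union:
  assumes inc: "incseq B"
  shows "(\<lambda>n. kp P (B n) j x y) \<longlonglongrightarrow> kp P (\<Union>n. B n) j x y"
proof (induction j arbitrary: y)
  case (Suc j)
  define I where "I n = (\<integral>\<^sup>+ z. kp P (B n) j x z * ennreal (P z y) \<partial>count_space UNIV)" for n
  have I: "I \<longlonglongrightarrow> (\<integral>\<^sup>+ z. kp P (\<Union>n. B n) j x z * ennreal (P z y) \<partial>count_space UNIV)"
    unfolding I_def
  proof (rule nn_integral_LIMSEQ)
    show "incseq (\<lambda>n z. kp P (B n) j x z * ennreal (P z y))"
      using inc by (auto simp: incseq_def le_fun_def intro!: mult_right_mono kp_mono_set)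
    show "(\<lambda>n. kp P (B n) j x z * ennreal (P z y)) \<longlonglongrightarrow> kp P (\<Union>n. B n) j x z * ennreal (P z y)" for z
      using ennreal_tendsto_cmult[OF _ Suc, of "ennreal (P z y)" z] by (simp add: mult.commute)
  qed auto
  show ?case
  proof (cases "y \<in> (\<Union>n. B n)")
    case True
    then obtain n0 where "y \<in> B n0" by auto
    then have "\<forall>\<^sub>F n in sequentially. I n = kp P (B n) (Suc j) x y"
      using inc unfolding eventually_sequentially I_def incseq_def
      by (intro exI[of _ n0]) (auto simp: subset_iff)
    with I True show ?thesis by (simp add: tendsto_cong)
  qed simp
qed simp

lemma killed_reward_tendsto:
  assumes "incseq B" "(\<Union>n. B n) = UNIV"
  shows "(\<lambda>n. killed_reward P (B n) K r x) \<longlonglongrightarrow> killed_reward P UNIV K r x"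
proof -
  have inc: "incseq (\<lambda>n. B n - K)" using assms(1) by (auto simp: incseq_def)
  have "(\<Union>n. B n - K) = UNIV - K" using assms(2) by auto
  then have "(\<lambda>n. kp P (B n - K) j x z * ennreal (r z)) \<longlonglongrightarrow> kp P (UNIV - K) j x z * ennreal (r z)"
    for j z
    using ennreal_tendsto_cmult[OF _ kp_tendsto_Union[OF inc], of "ennreal (r z)"]
    by (simp add: mult.commute)
  moreover have "kp P (B m - K) j x z \<le> kp P (B n - K) j x z" if "m \<le> n" for m n j z
    using incseqD[OF assms(1) that] by (intro kp_mono_set) auto
  ultimately show ?thesis unfolding killed_reward_def
    by (intro suminf_nn_integral_tendsto_incseq) (auto simp: incseq_def intro!: mult_right_mono)
qed

lemma hit_matrix_eq_killed_reward:
  "hit_matrix P B K x y = enn2real (killed_reward P B K (\<lambda>z. P z y) x)"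
  by (simp add: hit_matrix_def killed_reward_def)

lemma killed_reward_mono_set:
  assumes "B \<subseteq> B'"
  shows "killed_reward P B K r x \<le> killed_reward P B' K r x"
  unfolding killed_reward_def using assms
  by (intro suminf_le summableI allI nn_integral_mono mult_right_mono kp_mono_set) auto

lemma kp_mass_Suc:
  fixes P :: "'a::countable \<Rightarrow> 'a \<Rightarrow> real"
  assumes "stochastic_matrix P"
  shows "(\<integral>\<^sup>+z. kp P B (Suc m) x z \<partial>count_space UNIV) +
     (\<integral>\<^sup>+y. indicator (- B) y * (\<integral>\<^sup>+z. kp P B m x z * ennreal (P z y) \<partial>count_space UNIV) \<partial>count_space UNIV) =
     (\<integral>\<^sup>+z. kp P B m x z \<partial>count_space UNIV)"
proof -
  have "(\<integral>\<^sup>+z. kp P B (Suc m) x z \<partial>count_space UNIV) +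
     (\<integral>\<^sup>+y. indicator (- B) y * (\<integral>\<^sup>+z. kp P B m x z * ennreal (P z y) \<partial>count_space UNIV) \<partial>count_space UNIV) =
     (\<integral>\<^sup>+y. (\<integral>\<^sup>+z. kp P B m x z * ennreal (P z y) \<partial>count_space UNIV) \<partial>count_space UNIV)"
    by (subst nn_integral_add[symmetric]) (auto intro!: nn_integral_cong simp: indicator_def)
  also have "\<dots> = (\<integral>\<^sup>+z. kp P B m x z * (\<integral>\<^sup>+y. ennreal (P z y) \<partial>count_space UNIV) \<partial>count_space UNIV)"
    by (subst nn_integral_count_space_swap) (simp add: nn_integral_cmult)
  finally show ?thesis using stochastic_row_nn_integral[OF assms] by simp
qed

lemma exit_probabilities_le_1:
  fixes P :: "'a::countable \<Rightarrow> 'a \<Rightarrow> real"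
  assumes "stochastic_matrix P"
  shows "(\<Sum>m. \<integral>\<^sup>+y. indicator (- B) y *
            (\<integral>\<^sup>+z. kp P B m x z * ennreal (P z y) \<partial>count_space UNIV) \<partial>count_space UNIV) \<le> 1"
proof -
  define exit where "exit m = (\<integral>\<^sup>+y. indicator (- B) y *
            (\<integral>\<^sup>+z. kp P B m x z * ennreal (P z y) \<partial>count_space UNIV) \<partial>count_space UNIV)" for m
  define mass where "mass m = (\<integral>\<^sup>+z. kp P B m x z \<partial>count_space UNIV)" for m
  have "(\<Sum>i<N. exit i) + mass N = 1" for N
  proof (induction N)
    case 0
    have "kp P B 0 x = indicator {x}" by (auto simp: indicator_def)
    then show ?case by (simp add: mass_def)
  next
    case (Suc N)
    have "(\<Sum>i<Suc N. exit i) + mass (Suc N) = (\<Sum>i<N. exit i) + (mass (Suc N) + exit N)"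
      by (simp add: ac_simps)
    also have "mass (Suc N) + exit N = mass N"
      unfolding mass_def exit_def by (rule kp_mass_Suc[OF assms])
    finally show ?case using Suc by simp
  qed
  then have "(\<Sum>i<N. exit i) \<le> 1" for N by (metis le_iff_add)
  then show ?thesis unfolding exit_def[symmetric] by (intro suminf_le_const) auto
qed

lemma hit_row_sum_le_1:
  fixes P :: "'a::countable \<Rightarrow> 'a \<Rightarrow> real"
  assumes "stochastic_matrix P" "finite K"
  shows "(\<Sum>y\<in>K. killed_reward P B K (\<lambda>z. P z y) x) \<le> 1"
proof -
  have "(\<Sum>y\<in>K. killed_reward P B K (\<lambda>z. P z y) x) =
        (\<Sum>m. \<Sum>y\<in>K. \<integral>\<^sup>+z. kp P (B - K) m x z * ennreal (P z y) \<partial>count_space UNIV)"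
    unfolding killed_reward_def by (rule suminf_sum[symmetric]) (rule summableI)
  also have "\<dots> \<le> (\<Sum>m. \<integral>\<^sup>+y. indicator (- (B - K)) y *
            (\<integral>\<^sup>+z. kp P (B - K) m x z * ennreal (P z y) \<partial>count_space UNIV) \<partial>count_space UNIV)"
    using assms(2)
    by (intro suminf_le summableI allI)
      (auto simp: nn_integral_count_space_finite[symmetric] nn_integral_count_space_indicator
            indicator_def intro!: nn_integral_mono)
  also have "\<dots> \<le> 1" by (rule exit_probabilities_le_1[OF assms(1)])
  finally show ?thesis .
qed

lemma ennreal_hit_matrix:
  fixes P :: "'a::countable \<Rightarrow> 'a \<Rightarrow> real"
  assumes "stochastic_matrix P" "finite K" "y \<in> K"
  shows "ennreal (hit_matrix P B K x y) = killed_reward P B K (\<lambda>z. P z y) x"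
proof -
  have "killed_reward P B K (\<lambda>z. P z y) x \<le> (\<Sum>y\<in>K. killed_reward P B K (\<lambda>z. P z y) x)"
    using assms(2,3) by (intro member_le_sum) auto
  also have "\<dots> \<le> 1" by (rule hit_row_sum_le_1[OF assms(1,2)])
  finally have "killed_reward P B K (\<lambda>z. P z y) x \<noteq> \<infinity>"
    by (auto simp: top_unique)
  then show ?thesis by (simp add: hit_matrix_eq_killed_reward ennreal_enn2real_if)
qed

section \<open>Invariant measures and the cycle formula\<close>

context
  fixes P :: "'a::countable \<Rightarrow> 'a \<Rightarrow> real" and \<mu> :: "'a \<Rightarrow> ennreal"
  assumes invariant: "\<And>z. (\<integral>\<^sup>+u. \<mu> u * ennreal (P u z) \<partial>count_space UNIV) = \<mu> z"
begin

lemma invariant_measure_kp: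
  "(\<integral>\<^sup>+u. \<mu> u * kp P UNIV j u z \<partial>count_space UNIV) = \<mu> z"
proof (induction j arbitrary: z)
  case (Suc j)
  have "(\<integral>\<^sup>+u. \<mu> u * kp P UNIV (Suc j) u z \<partial>count_space UNIV) =
        (\<integral>\<^sup>+u. (\<integral>\<^sup>+v. \<mu> u * (kp P UNIV j u v * ennreal (P v z)) \<partial>count_space UNIV) \<partial>count_space UNIV)"
    by (simp add: nn_integral_cmult)
  also have "\<dots> = (\<integral>\<^sup>+v. (\<integral>\<^sup>+u. \<mu> u * kp P UNIV j u v \<partial>count_space UNIV) * ennreal (P v z) \<partial>count_space UNIV)"
    by (subst nn_integral_count_space_swap) (simp add: nn_integral_multc[symmetric] mult.assoc)
  finally show ?case using Suc invariant by simp
qed simp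

lemma invariant_measure_kp_le: "\<mu> u * kp P UNIV j u z \<le> \<mu> z"
  using nn_integral_count_space_ge_point[of "\<lambda>u. \<mu> u * kp P UNIV j u z" u] invariant_measure_kp
  by simp

lemma invariant_measure_eq_0:
  assumes "irreducible_chain P" "\<mu> z = 0"
  shows "\<mu> u = 0"
proof -
  obtain j where "kp P UNIV j u z > 0"
    using assms(1) by (auto simp: irreducible_chain_def)
  then show ?thesis
    using invariant_measure_kp_le[of u j z] assms(2) by (auto simp: mult_eq_0_iff)
qed

end

text \<open>Since \<open>P\<close> preserves total mass, a subinvariant measure of finite mass cannot lose mass
  anywhere.\<close>
lemma subinvariant_measure_invariant:
  fixes P :: "'a::countable \<Rightarrow> 'a \<Rightarrow> real" and \<mu> :: "'a \<Rightarrow> ennreal"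
  assumes "stochastic_matrix P"
    and sub: "\<And>z. \<mu> z \<le> (\<integral>\<^sup>+u. \<mu> u * ennreal (P u z) \<partial>count_space UNIV)"
    and finite_mass: "(\<integral>\<^sup>+z. \<mu> z \<partial>count_space UNIV) < \<infinity>"
  shows "(\<integral>\<^sup>+u. \<mu> u * ennreal (P u z) \<partial>count_space UNIV) = \<mu> z"
proof -
  define \<mu>P where "\<mu>P z = (\<integral>\<^sup>+u. \<mu> u * ennreal (P u z) \<partial>count_space UNIV)" for z
  have mass: "(\<integral>\<^sup>+z. \<mu>P z \<partial>count_space UNIV) = (\<integral>\<^sup>+z. \<mu> z \<partial>count_space UNIV)"
    unfolding \<mu>P_def
    by (subst nn_integral_count_space_swap) (simp add: nn_integral_cmult stochastic_row_nn_integral[OF assms(1)])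
  have "(\<integral>\<^sup>+z. \<mu>P z - \<mu> z \<partial>count_space UNIV) =
        (\<integral>\<^sup>+z. \<mu>P z \<partial>count_space UNIV) - (\<integral>\<^sup>+z. \<mu> z \<partial>count_space UNIV)"
    using finite_mass sub by (intro nn_integral_diff) (auto simp: \<mu>P_def)
  also have "\<dots> = 0" using mass finite_mass by (simp add: diff_eq_0_iff_ennreal)
  finally have "\<mu>P z - \<mu> z = 0"
    by (simp add: nn_integral_0_iff_AE AE_count_space)
  then show ?thesis using sub[of z] by (simp add: \<mu>P_def antisym ennreal_minus_eq_0)
qed

locale irreducible_stationary_chain =
  fixes P :: "'a::countable \<Rightarrow> 'a \<Rightarrow> real" and \<pi> :: "'a \<Rightarrow> real"
  assumes stochastic: "stochastic_matrix P"
    and irreducible: "irreducible_chain P"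
    and stationary: "stationary_dist P \<pi>"
begin

lemma stationary_nonneg: "0 \<le> \<pi> x"
  using stationary by (simp add: stationary_dist_def)

lemma stationary_invariant:
  "(\<integral>\<^sup>+u. ennreal (\<pi> u) * ennreal (P u z) \<partial>count_space UNIV) = ennreal (\<pi> z)"
proof -
  have "(\<integral>\<^sup>+u. ennreal (\<pi> u * P u z) \<partial>count_space UNIV) = ennreal (\<pi> z)"
    using stationary stochastic
    by (intro nn_integral_count_space_has_sum) (auto simp: stationary_dist_def stochastic_matrix_def)
  then show ?thesis
    using stochastic by (simp add: ennreal_mult stationary_nonneg stochastic_matrix_def)
qed

lemma stationary_mass: "(\<integral>\<^sup>+u. ennreal (\<pi> u) \<partial>count_space UNIV) = 1"
  using stationary
  by (intro nn_integral_count_space_has_sum[where s=1, simplified]) (auto simp: stationary_dist_def)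

lemma stationary_pos: "0 < \<pi> x"
proof (rule ccontr)
  assume "\<not> 0 < \<pi> x"
  then have "ennreal (\<pi> x) = 0" by (simp add: ennreal_eq_0_iff)
  then have "ennreal (\<pi> u) = 0" for u
    using invariant_measure_eq_0[OF stationary_invariant irreducible] by blast
  then show False using stationary_mass by simp
qed

text \<open>The mass that \<open>\<pi>\<close>, restricted to \<open>K\<close>, gives to the event
  \<open>X\<^sub>j = z, X\<^sub>1, \<dots>, X\<^sub>j \<notin> K\<close>.\<close>
definition cycle_occupation :: "'a set \<Rightarrow> nat \<Rightarrow> 'a \<Rightarrow> ennreal" where
  "cycle_occupation K j z = (\<Sum>x\<in>K. ennreal (\<pi> x) * kp P (UNIV - K) j x z)"

lemma cycle_occupation_0:
  "finite K \<Longrightarrow> cycle_occupation K 0 z = ennreal (\<pi> z) * indicator K z"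
  by (simp add: cycle_occupation_def indicator_def if_distrib cong: if_cong)

lemma cycle_occupation_Suc:
  "cycle_occupation K (Suc j) z =
     (\<integral>\<^sup>+u. cycle_occupation K j u * ennreal (P u z) \<partial>count_space UNIV) * indicator (UNIV - K) z"
proof -
  have "cycle_occupation K (Suc j) z =
     (\<Sum>x\<in>K. ennreal (\<pi> x) * (\<integral>\<^sup>+u. kp P (UNIV - K) j x u * ennreal (P u z) \<partial>count_space UNIV))
       * indicator (UNIV - K) z"
    by (simp add: cycle_occupation_def sum_distrib_right mult.assoc)
  also have "\<dots> = (\<integral>\<^sup>+u. cycle_occupation K j u * ennreal (P u z) \<partial>count_space UNIV) *
      indicator (UNIV - K) z"
    unfolding cycle_occupation_def
    by (simp add: sum_distrib_right nn_integral_sum nn_integral_cmult mult.assoc)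
  finally show ?thesis .
qed

lemma cycle_occupation_le:
  assumes "finite K"
  shows "(\<Sum>j. cycle_occupation K j z) \<le> ennreal (\<pi> z)"
proof -
  have "(\<Sum>j<N. cycle_occupation K j z) \<le> ennreal (\<pi> z)" for N
  proof (induction N arbitrary: z)
    case (Suc N)
    have "(\<Sum>j<Suc N. cycle_occupation K j z) =
          cycle_occupation K 0 z + (\<Sum>j<N. cycle_occupation K (Suc j) z)"
      by (rule sum.lessThan_Suc_shift)
    also have "(\<Sum>j<N. cycle_occupation K (Suc j) z) =
        (\<integral>\<^sup>+u. (\<Sum>j<N. cycle_occupation K j u) * ennreal (P u z) \<partial>count_space UNIV) * indicator (UNIV - K) z"
      by (simp add: cycle_occupation_Suc sum_distrib_right[symmetric] nn_integral_sum[symmetric])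
    also have "\<dots> \<le> (\<integral>\<^sup>+u. ennreal (\<pi> u) * ennreal (P u z) \<partial>count_space UNIV) * indicator (UNIV - K) z"
      by (intro mult_right_mono nn_integral_mono Suc) auto
    finally show ?case
      using assms by (cases "z \<in> K") (simp_all add: cycle_occupation_0 stationary_invariant)
  qed simp
  then show ?thesis by (intro suminf_le_const summableI)
qed

lemma suminf_cycle_occupation_on_K:
  assumes "finite K" "z \<in> K"
  shows "(\<Sum>j. cycle_occupation K j z) = ennreal (\<pi> z)"
proof (rule antisym)
  show "(\<Sum>j. cycle_occupation K j z) \<le> ennreal (\<pi> z)"
    by (rule cycle_occupation_le[OF assms(1)])
  show "ennreal (\<pi> z) \<le> (\<Sum>j. cycle_occupation K j z)"
    using sum_le_suminf[OF summableI, of "{0}" "\<lambda>j. cycle_occupation K j z"] assms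
    by (simp add: cycle_occupation_0)
qed

lemma suminf_cycle_occupation_invariant_off_K:
  assumes "finite K" "z \<notin> K"
  shows "(\<integral>\<^sup>+u. (\<Sum>j. cycle_occupation K j u) * ennreal (P u z) \<partial>count_space UNIV) =
    (\<Sum>j. cycle_occupation K j z)"
proof -
  have "(\<integral>\<^sup>+u. (\<Sum>j. cycle_occupation K j u) * ennreal (P u z) \<partial>count_space UNIV) =
      (\<Sum>j. cycle_occupation K (Suc j) z)"
    using assms(2) by (simp add: cycle_occupation_Suc nn_integral_suminf[symmetric])
  also have "\<dots> = (\<Sum>j. cycle_occupation K j z)"
    using sums_Suc[OF summable_sums[OF summableI, of "\<lambda>j. cycle_occupation K (Suc j) z"]] assms
    by (simp add: cycle_occupation_0 sums_iff)
  finally show ?thesis .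
qed

text \<open>The occupation measure \<open>m\<close> is dominated by \<open>\<pi>\<close>, agrees with it on \<open>K\<close> and is
  invariant off \<open>K\<close>; so \<open>\<pi> - m\<close> is a subinvariant measure of finite mass vanishing on \<open>K\<close>,
  hence invariant and, by irreducibility, zero.\<close>
lemma cycle_measure:
  assumes "finite K" "K \<noteq> {}"
  shows "(\<Sum>j. cycle_occupation K j z) = ennreal (\<pi> z)"
proof -
  define m where "m z = (\<Sum>j. cycle_occupation K j z)" for z
  define d where "d z = ennreal (\<pi> z) - m z" for z
  have d_m: "d z + m z = ennreal (\<pi> z)" for z
    unfolding d_def m_def using cycle_occupation_le[OF assms(1)] diff_add_cancel_ennreal by blast
  have d_K: "d z = 0" if "z \<in> K" for z
    using suminf_cycle_occupation_on_K[OF assms(1) that] by (simp add: d_def m_def)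
  have d_off_K: "(\<integral>\<^sup>+u. d u * ennreal (P u z) \<partial>count_space UNIV) = d z" if "z \<notin> K" for z
  proof -
    have "(\<integral>\<^sup>+u. d u * ennreal (P u z) \<partial>count_space UNIV) + m z =
          (\<integral>\<^sup>+u. (d u + m u) * ennreal (P u z) \<partial>count_space UNIV)"
      unfolding m_def
      by (simp add: distrib_right nn_integral_add suminf_cycle_occupation_invariant_off_K[OF assms(1) that])
    also have "\<dots> = d z + m z" by (simp add: d_m stationary_invariant)
    finally have "(\<integral>\<^sup>+u. d u * ennreal (P u z) \<partial>count_space UNIV) + m z = d z + m z" .
    moreover have "m z \<noteq> \<infinity>"
      using cycle_occupation_le[OF assms(1), of z] by (auto simp: m_def top_unique)
    ultimately show ?thesis by (simp add: ennreal_add_left_cancel)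
  qed
  have "(\<integral>\<^sup>+z. d z \<partial>count_space UNIV) \<le> (\<integral>\<^sup>+z. ennreal (\<pi> z) \<partial>count_space UNIV)"
    by (intro nn_integral_mono) (metis d_m le_iff_add)
  then have d_mass: "(\<integral>\<^sup>+z. d z \<partial>count_space UNIV) < \<infinity>"
    by (simp add: stationary_mass le_less_trans)
  have d_invariant: "(\<integral>\<^sup>+u. d u * ennreal (P u z) \<partial>count_space UNIV) = d z" for z
    using d_K d_off_K by (intro subinvariant_measure_invariant[OF stochastic _ d_mass]) (metis order_refl zero_le)
  obtain x0 where "x0 \<in> K" using assms(2) by auto
  then have "d z = 0" for z
    using invariant_measure_eq_0[OF d_invariant irreducible] d_K by blast
  then show ?thesis using d_m by (simp add: m_def)
qed

lemma cycle_formula: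
  assumes "finite K" "K \<noteq> {}"
  shows "(\<Sum>x\<in>K. ennreal (\<pi> x) * killed_reward P UNIV K f x) =
         (\<integral>\<^sup>+z. ennreal (\<pi> z) * ennreal (f z) \<partial>count_space UNIV)"
proof -
  have "(\<integral>\<^sup>+z. ennreal (\<pi> z) * ennreal (f z) \<partial>count_space UNIV) =
        (\<integral>\<^sup>+z. (\<Sum>j. cycle_occupation K j z * ennreal (f z)) \<partial>count_space UNIV)"
    by (simp add: cycle_measure[OF assms, symmetric] ennreal_suminf_multc)
  also have "\<dots> = (\<Sum>j. \<Sum>x\<in>K. ennreal (\<pi> x) *
                    (\<integral>\<^sup>+z. kp P (UNIV - K) j x z * ennreal (f z) \<partial>count_space UNIV))"
    by (simp add: nn_integral_suminf cycle_occupation_def sum_distrib_right nn_integral_sum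
        nn_integral_cmult mult.assoc)
  also have "\<dots> = (\<Sum>x\<in>K. ennreal (\<pi> x) * killed_reward P UNIV K f x)"
    by (simp add: killed_reward_def suminf_sum[OF summableI] ennreal_suminf_cmult)
  finally show ?thesis ..
qed

end

section \<open>Nonnegative matrices on a finite set\<close>

lemma mpow_nonneg:
  assumes "\<forall>x\<in>K. \<forall>y\<in>K. 0 \<le> G x y" "y \<in> K"
  shows "0 \<le> mpow K G m x y"
  using assms(2)
  by (induction m arbitrary: y) (auto intro!: sum_nonneg mult_nonneg_nonneg assms(1)[rule_format])

lemma mpow_mono:
  assumes "\<forall>x\<in>K. \<forall>y\<in>K. 0 \<le> G x y \<and> G x y \<le> H x y" "y \<in> K"
  shows "mpow K G m x y \<le> mpow K H m x y"
  using assms(2)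
proof (induction m arbitrary: y)
  case (Suc m)
  have G: "\<forall>x\<in>K. \<forall>y\<in>K. 0 \<le> G x y" and H: "\<forall>x\<in>K. \<forall>y\<in>K. 0 \<le> H x y"
    using assms(1) by (meson order_trans)+
  show ?case unfolding mpow.simps
  proof (rule sum_mono)
    fix z assume z: "z \<in> K"
    show "mpow K G m x z * G z y \<le> mpow K H m x z * H z y"
      using Suc z assms(1) mpow_nonneg[OF G z] mpow_nonneg[OF H z] by (intro mult_mono) auto
  qed
qed simp

lemma irreducible_on_mono:
  assumes "irreducible_on K G" "\<forall>x\<in>K. \<forall>y\<in>K. G x y \<le> H x y"
  shows "irreducible_on K H"
  unfolding irreducible_on_def
proof (intro ballI)
  fix x y assume xy: "x \<in> K" "y \<in> K"
  have G_nonneg: "\<forall>x\<in>K. \<forall>y\<in>K. 0 \<le> G x y"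
    using assms(1) by (auto simp: irreducible_on_def)
  obtain m where "0 < mpow K G (Suc m) x y"
    using assms(1) xy unfolding irreducible_on_def by blast
  moreover have "mpow K G (Suc m) x y \<le> mpow K H (Suc m) x y"
    using G_nonneg assms(2) xy by (intro mpow_mono) auto
  moreover have "\<forall>z\<in>K. 0 \<le> H x z"
    using G_nonneg assms(2) xy by (meson order_trans)
  ultimately show "(\<forall>z\<in>K. 0 \<le> H x z) \<and> (\<exists>m. 0 < mpow K H (Suc m) x y)"
    by (meson less_le_trans)
qed

lemma mpow_left_invariant:
  assumes "finite K" "\<forall>y\<in>K. (\<Sum>x\<in>K. d x * G x y) = d y" "y \<in> K"
  shows "(\<Sum>x\<in>K. d x * mpow K G m x y) = d y"
  using assms(3)
proof (induction m arbitrary: y)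
  case 0
  have "d x * mpow K G 0 x y = (if x = y then d y else 0)" for x by simp
  then show ?case using assms(1) 0 by simp
next
  case (Suc m)
  have "(\<Sum>x\<in>K. d x * mpow K G (Suc m) x y) = (\<Sum>x\<in>K. \<Sum>z\<in>K. d x * mpow K G m x z * G z y)"
    by (simp add: sum_distrib_left mult.assoc)
  also have "\<dots> = (\<Sum>z\<in>K. (\<Sum>x\<in>K. d x * mpow K G m x z) * G z y)"
    by (subst sum.swap) (simp add: sum_distrib_right)
  finally show ?case using Suc assms(2) by simp
qed

lemma mpow_right_invariant:
  assumes "finite K" "\<forall>x\<in>K. (\<Sum>y\<in>K. G x y * h y) = h x" "x \<in> K"
  shows "(\<Sum>y\<in>K. mpow K G m x y * h y) = h x"
proof (induction m)
  case 0
  have "mpow K G 0 x y * h y = (if x = y then h x else 0)" for y by simp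
  then show ?case using assms(1,3) by simp
next
  case (Suc m)
  have "(\<Sum>y\<in>K. mpow K G (Suc m) x y * h y) = (\<Sum>y\<in>K. \<Sum>z\<in>K. mpow K G m x z * G z y * h y)"
    by (simp add: sum_distrib_right)
  also have "\<dots> = (\<Sum>z\<in>K. mpow K G m x z * (\<Sum>y\<in>K. G z y * h y))"
    by (subst sum.swap) (simp add: sum_distrib_left mult.assoc)
  finally show ?case using Suc assms(2) by simp
qed

lemma left_invariant_eq_0:
  assumes "finite K" "irreducible_on K G"
    and "\<forall>x\<in>K. 0 \<le> d x" "\<forall>y\<in>K. (\<Sum>x\<in>K. d x * G x y) = d y"
    and "z \<in> K" "d z = 0" "u \<in> K"
  shows "d u = 0"
proof -
  obtain m where m: "0 < mpow K G (Suc m) u z"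
    using assms(2,5,7) unfolding irreducible_on_def by blast
  have "d u * mpow K G (Suc m) u z \<le> (\<Sum>x\<in>K. d x * mpow K G (Suc m) x z)"
    using assms(1-3,5,7) mpow_nonneg[of K G z "Suc m"]
    by (intro member_le_sum) (auto simp: irreducible_on_def simp del: mpow.simps)
  also have "\<dots> = 0" using mpow_left_invariant[OF assms(1,4,5)] assms(6) by (simp del: mpow.simps)
  finally show ?thesis
    using assms(3)[rule_format, OF assms(7)] m by (simp add: mult_le_0_iff del: mpow.simps)
qed

lemma right_invariant_eq_0:
  assumes "finite K" "irreducible_on K G"
    and "\<forall>x\<in>K. 0 \<le> d x" "\<forall>x\<in>K. (\<Sum>y\<in>K. G x y * d y) = d x"
    and "z \<in> K" "d z = 0" "u \<in> K"
  shows "d u = 0"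
proof -
  obtain m where m: "0 < mpow K G (Suc m) z u"
    using assms(2,5,7) unfolding irreducible_on_def by blast
  have "mpow K G (Suc m) z u * d u \<le> (\<Sum>y\<in>K. mpow K G (Suc m) z y * d y)"
    using assms(1-3,5,7) mpow_nonneg[of K G _ "Suc m" z]
    by (intro member_le_sum) (auto simp: irreducible_on_def simp del: mpow.simps)
  also have "\<dots> = 0" using mpow_right_invariant[OF assms(1,4,5)] assms(6) by (simp del: mpow.simps)
  finally show ?thesis
    using assms(3)[rule_format, OF assms(7)] m by (simp add: mult_le_0_iff del: mpow.simps)
qed

text \<open>With \<open>t = max (l/w)\<close>, the vector \<open>t w - l\<close> is nonnegative, invariant and vanishes
  somewhere.\<close>
lemma stationary_on_unique:
  assumes "finite K" "irreducible_on K G"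
    and w: "stationary_on K G w" "\<forall>x\<in>K. 0 < w x"
    and l: "stationary_on K G l" and "x \<in> K"
  shows "l x = w x"
proof -
  define t where "t = Max ((\<lambda>x. l x / w x) ` K)"
  obtain z where z: "z \<in> K" "t = l z / w z"
    using Max_in[of "(\<lambda>x. l x / w x) ` K"] assms(1,6) unfolding t_def by blast
  have "l u / w u \<le> t" if "u \<in> K" for u
    using assms(1) that unfolding t_def by auto
  then have nonneg: "\<forall>u\<in>K. 0 \<le> t * w u - l u"
    using w(2) by (auto simp: field_simps)
  have "(\<Sum>x\<in>K. (t * w x - l x) * G x y) = t * (\<Sum>x\<in>K. w x * G x y) - (\<Sum>x\<in>K. l x * G x y)"
    for y by (simp add: left_diff_distrib sum_subtractf sum_distrib_left mult.assoc)
  then have invariant: "\<forall>y\<in>K. (\<Sum>x\<in>K. (t * w x - l x) * G x y) = t * w y - l y"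
    using w(1) l by (simp add: stationary_on_def)
  have "t * w z - l z = 0"
    using z w(2)[rule_format, OF z(1)] by simp
  then have d0: "t * w u - l u = 0" if "u \<in> K" for u
    by (rule left_invariant_eq_0[OF assms(1,2) nonneg invariant z(1) _ that])
  then have "(\<Sum>x\<in>K. l x) = t * (\<Sum>x\<in>K. w x)"
    by (simp add: sum_distrib_left)
  then have "t = 1" using w(1) l by (simp add: stationary_on_def)
  then show ?thesis using d0[OF assms(6)] by simp
qed

lemma harmonic_on_const:
  assumes "finite K" "irreducible_on K G"
    and rows: "\<forall>x\<in>K. (\<Sum>y\<in>K. G x y) = 1"
    and harmonic: "\<forall>x\<in>K. (\<Sum>y\<in>K. G x y * h y) = h x"
    and "x \<in> K" "y \<in> K"
  shows "h x = h y"
proof -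
  define t where "t = Min (h ` K)"
  obtain z where z: "z \<in> K" "t = h z"
    using Min_in[of "h ` K"] assms(1,5) unfolding t_def by blast
  have nonneg: "\<forall>u\<in>K. 0 \<le> h u - t"
    using assms(1) by (auto simp: t_def)
  have "\<forall>x\<in>K. (\<Sum>y\<in>K. G x y * (h y - t)) = h x - t"
    using rows harmonic by (simp add: right_diff_distrib sum_subtractf sum_distrib_right[symmetric])
  then have "h u - t = 0" if "u \<in> K" for u
    using z by (intro right_invariant_eq_0[OF assms(1,2) nonneg _ z(1) _ that]) simp_all
  then show ?thesis using assms(5,6) by fastforce
qed

lemma finite_bounded_convergent_subseq:
  fixes f :: "nat \<Rightarrow> 'a \<Rightarrow> real"
  assumes "finite K" "\<And>n x. x \<in> K \<Longrightarrow> \<bar>f n x\<bar> \<le> C"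
  obtains r l where "strict_mono r" "\<And>x. x \<in> K \<Longrightarrow> (\<lambda>k. f (r k) x) \<longlonglongrightarrow> l x"
proof -
  have "bounded ((\<lambda>g. g x) ` range f)" if "x \<in> K" for x
    using assms(2)[OF that] by (auto simp: bounded_real)
  then obtain l r where "strict_mono r"
    and conv: "\<forall>e>0. \<forall>\<^sub>F n in sequentially. \<forall>x\<in>K. dist (f (r n) x) (l x) < e"
    using compact_lemma_general[where basis=K and f=f and proj="\<lambda>g x. g x" and unproj="\<lambda>g. g"] assms(1) by blast
  moreover have "(\<lambda>k. f (r k) x) \<longlonglongrightarrow> l x" if "x \<in> K" for x
  proof (rule tendstoI)
    fix e :: real assume "0 < e"
    with conv have "\<forall>\<^sub>F n in sequentially. \<forall>x\<in>K. dist (f (r n) x) (l x) < e" by blast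
    then show "\<forall>\<^sub>F n in sequentially. dist (f (r n) x) (l x) < e"
      by (rule eventually_mono) (use that in blast)
  qed
  ultimately show ?thesis using that by blast
qed

lemma tendsto_if_subseq_limits_unique:
  fixes f :: "nat \<Rightarrow> 'a \<Rightarrow> real"
  assumes "finite K" "\<And>n x. x \<in> K \<Longrightarrow> \<bar>f n x\<bar> \<le> C"
    and unique: "\<And>s l. strict_mono s \<Longrightarrow> (\<And>x. x \<in> K \<Longrightarrow> (\<lambda>k. f (s k) x) \<longlonglongrightarrow> l x) \<Longrightarrow>
        \<forall>x\<in>K. l x = w x"
    and "x \<in> K"
  shows "(\<lambda>n. f n x) \<longlonglongrightarrow> w x"
proof (rule ccontr)
  assume "\<not> ?thesis"
  then obtain e where e: "e > 0" "\<not> (\<forall>\<^sub>F n in sequentially. dist (f n x) (w x) < e)"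
    unfolding tendsto_iff by blast
  from not_eventually_sequentiallyD[OF e(2)]
  obtain s :: "nat \<Rightarrow> nat" where s: "strict_mono s" "\<forall>n. \<not> dist (f (s n) x) (w x) < e"
    by blast
  obtain r l where r: "strict_mono r" "\<And>x. x \<in> K \<Longrightarrow> (\<lambda>k. f (s (r k)) x) \<longlonglongrightarrow> l x"
    using finite_bounded_convergent_subseq[of K "\<lambda>k. f (s k)" C] assms(1,2) by blast
  have "\<forall>x\<in>K. l x = w x"
    using unique[of "s \<circ> r" l] strict_mono_o[OF s(1) r(1)] r(2) by simp
  then have "(\<lambda>k. f (s (r k)) x) \<longlonglongrightarrow> w x" using r(2) assms(4) by simp
  then have "\<forall>\<^sub>F k in sequentially. dist (f (s (r k)) x) (w x) < e"
    using e(1) by (rule tendstoD)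
  then obtain N where "\<forall>k\<ge>N. dist (f (s (r k)) x) (w x) < e"
    unfolding eventually_sequentially by blast
  then show False using s(2) by blast
qed

lemma stationary_on_tendsto:
  assumes "finite K" "irreducible_on K G" "stationary_on K G w" "\<forall>x\<in>K. 0 < w x"
    and Q: "\<And>x y. x \<in> K \<Longrightarrow> y \<in> K \<Longrightarrow> (\<lambda>n. Q n x y) \<longlonglongrightarrow> G x y"
    and p: "\<And>n. stationary_on K (Q n) (p n)"
    and "x \<in> K"
  shows "(\<lambda>n. p n x) \<longlonglongrightarrow> w x"
proof (rule tendsto_if_subseq_limits_unique[OF assms(1) _ _ assms(7)])
  show "\<bar>p n x\<bar> \<le> 1" if "x \<in> K" for n x
    using p[of n] that assms(1) member_le_sum[of x K "p n"]
    by (auto simp: stationary_on_def)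
next
  fix s :: "nat \<Rightarrow> nat" and l
  assume s: "strict_mono s" and l: "\<And>x. x \<in> K \<Longrightarrow> (\<lambda>k. p (s k) x) \<longlonglongrightarrow> l x"
  have "0 \<le> l x" if "x \<in> K" for x
    using p that by (intro LIMSEQ_le_const[OF l[OF that]]) (auto simp: stationary_on_def)
  moreover have "(\<lambda>k. \<Sum>x\<in>K. p (s k) x) \<longlonglongrightarrow> (\<Sum>x\<in>K. l x)"
    using l by (intro tendsto_sum)
  then have "(\<Sum>x\<in>K. l x) = 1"
    using p by (simp add: stationary_on_def LIMSEQ_const_iff)
  moreover have "(\<Sum>x\<in>K. l x * G x y) = l y" if "y \<in> K" for y
  proof -
    have "(\<lambda>k. \<Sum>x\<in>K. p (s k) x * Q (s k) x y) \<longlonglongrightarrow> (\<Sum>x\<in>K. l x * G x y)"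
      using LIMSEQ_subseq_LIMSEQ[OF Q s] that
      by (intro tendsto_sum tendsto_mult l) (simp_all add: o_def)
    moreover have "(\<Sum>x\<in>K. p (s k) x * Q (s k) x y) = p (s k) y" for k
      using p that by (simp add: stationary_on_def)
    ultimately show ?thesis using l[OF that] by (simp add: LIMSEQ_unique)
  qed
  ultimately have "stationary_on K G l" by (simp add: stationary_on_def)
  then show "\<forall>x\<in>K. l x = w x"
    using stationary_on_unique[OF assms(1-4)] by blast
qed

lemma left_eigenvalue_bound:
  fixes Q :: "'a \<Rightarrow> 'a \<Rightarrow> real"
  assumes "finite K" "K \<noteq> {}" "\<And>x. x \<in> K \<Longrightarrow> 0 < \<nu> x"
    and eigen: "\<And>y. y \<in> K \<Longrightarrow> (\<Sum>x\<in>K. \<nu> x * Q x y) = lam * \<nu> y"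
  shows "\<bar>lam - 1\<bar> \<le> (\<Sum>x\<in>K. \<bar>(\<Sum>y\<in>K. Q x y) - 1\<bar>)"
proof -
  define S where "S = (\<Sum>x\<in>K. \<nu> x)"
  have S: "0 < S" unfolding S_def using assms(1-3) by (simp add: sum_pos)
  have "lam * S = (\<Sum>y\<in>K. \<Sum>x\<in>K. \<nu> x * Q x y)"
    by (simp add: S_def sum_distrib_left eigen)
  also have "\<dots> = (\<Sum>x\<in>K. \<nu> x * (\<Sum>y\<in>K. Q x y))"
    by (subst sum.swap) (simp add: sum_distrib_left)
  finally have "(lam - 1) * S = (\<Sum>x\<in>K. \<nu> x * ((\<Sum>y\<in>K. Q x y) - 1))"
    by (simp add: S_def left_diff_distrib right_diff_distrib sum_subtractf)
  then have "\<bar>lam - 1\<bar> * S = \<bar>\<Sum>x\<in>K. \<nu> x * ((\<Sum>y\<in>K. Q x y) - 1)\<bar>"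
    using S by (metis abs_mult abs_of_pos)
  also have "\<dots> \<le> (\<Sum>x\<in>K. \<bar>\<nu> x * ((\<Sum>y\<in>K. Q x y) - 1)\<bar>)"
    by (rule sum_abs)
  also have "\<dots> = (\<Sum>x\<in>K. \<nu> x * \<bar>(\<Sum>y\<in>K. Q x y) - 1\<bar>)"
    using assms(3) by (intro sum.cong refl) (simp add: abs_mult abs_of_pos)
  also have "\<dots> \<le> (\<Sum>x\<in>K. S * \<bar>(\<Sum>y\<in>K. Q x y) - 1\<bar>)"
    unfolding S_def using assms(1,3)
    by (intro sum_mono mult_right_mono member_le_sum) (auto intro: less_imp_le)
  also have "\<dots> = (\<Sum>x\<in>K. \<bar>(\<Sum>y\<in>K. Q x y) - 1\<bar>) * S"
    by (simp add: sum_distrib_left mult.commute)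
  finally show ?thesis
    using S by (rule mult_right_le_imp_le)
qed

lemma left_eigenvalue_tendsto_1:
  fixes Q :: "nat \<Rightarrow> 'a \<Rightarrow> 'a \<Rightarrow> real"
  assumes "finite K" "K \<noteq> {}"
    and rows: "\<And>x. x \<in> K \<Longrightarrow> (\<lambda>n. \<Sum>y\<in>K. Q n x y) \<longlonglongrightarrow> 1"
    and "\<And>n x. x \<in> K \<Longrightarrow> 0 < \<nu> n x"
    and "\<And>n y. y \<in> K \<Longrightarrow> (\<Sum>x\<in>K. \<nu> n x * Q n x y) = lam n * \<nu> n y"
  shows "lam \<longlonglongrightarrow> 1"
proof -
  have bound: "norm (lam n - 1) \<le> (\<Sum>x\<in>K. \<bar>(\<Sum>y\<in>K. Q n x y) - 1\<bar>)" for n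
    unfolding real_norm_def using assms by (intro left_eigenvalue_bound)
  have "(\<lambda>n. \<Sum>x\<in>K. \<bar>(\<Sum>y\<in>K. Q n x y) - 1\<bar>) \<longlonglongrightarrow> (\<Sum>x\<in>K. 0)"
    using rows by (intro tendsto_sum tendsto_rabs_zero LIM_zero)
  then have "(\<lambda>n. lam n - 1) \<longlonglongrightarrow> 0"
    using Lim_null_comparison[OF always_eventually[OF allI[OF bound]]] by simp
  then show ?thesis by (rule LIM_zero_cancel)
qed

lemma normalized_right_eigenvector_tendsto:
  assumes "finite K" "irreducible_on K G" "\<forall>x\<in>K. (\<Sum>y\<in>K. G x y) = 1"
    and Q: "\<And>x y. x \<in> K \<Longrightarrow> y \<in> K \<Longrightarrow> (\<lambda>n. Q n x y) \<longlonglongrightarrow> G x y"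
    and lam: "lam \<longlonglongrightarrow> 1"
    and \<eta>: "\<And>n x. x \<in> K \<Longrightarrow> 0 \<le> \<eta> n x" "\<And>n. (\<Sum>x\<in>K. \<eta> n x) = 1"
    and eigen: "\<And>n x. x \<in> K \<Longrightarrow> (\<Sum>y\<in>K. Q n x y * \<eta> n y) = lam n * \<eta> n x"
    and "x \<in> K"
  shows "(\<lambda>n. \<eta> n x) \<longlonglongrightarrow> 1 / card K"
proof (rule tendsto_if_subseq_limits_unique[OF assms(1) _ _ assms(9)])
  show "\<bar>\<eta> n x\<bar> \<le> 1" if "x \<in> K" for n x
    using \<eta> that assms(1) member_le_sum[of x K "\<eta> n"] by auto
next
  fix s :: "nat \<Rightarrow> nat" and l
  assume s: "strict_mono s" and l: "\<And>x. x \<in> K \<Longrightarrow> (\<lambda>k. \<eta> (s k) x) \<longlonglongrightarrow> l x"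
  have "(\<lambda>k. \<Sum>x\<in>K. \<eta> (s k) x) \<longlonglongrightarrow> (\<Sum>x\<in>K. l x)"
    using l by (intro tendsto_sum)
  then have sum_l: "(\<Sum>x\<in>K. l x) = 1"
    using \<eta> by (simp add: LIMSEQ_const_iff)
  have "(\<Sum>y\<in>K. G x y * l y) = l x" if "x \<in> K" for x
  proof -
    have "(\<lambda>k. \<Sum>y\<in>K. Q (s k) x y * \<eta> (s k) y) \<longlonglongrightarrow> (\<Sum>y\<in>K. G x y * l y)"
      using LIMSEQ_subseq_LIMSEQ[OF Q s] that
      by (intro tendsto_sum tendsto_mult l) (simp_all add: o_def)
    moreover have "(\<lambda>k. lam (s k) * \<eta> (s k) x) \<longlonglongrightarrow> 1 * l x"
      using LIMSEQ_subseq_LIMSEQ[OF lam s] by (intro tendsto_mult l that) (simp add: o_def)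
    ultimately show ?thesis using eigen[OF that] by (simp add: LIMSEQ_unique)
  qed
  then have const: "l y = l x" if "x \<in> K" "y \<in> K" for x y
    using harmonic_on_const[OF assms(1-3)] that by blast
  have "card K * l x = 1" if "x \<in> K" for x
  proof -
    have "(\<Sum>y\<in>K. l y) = (\<Sum>y\<in>K. l x)" by (rule sum.cong[OF refl const[OF that]])
    then show ?thesis using sum_l by simp
  qed
  moreover have "0 < card K"
    using assms(1,9) card_gt_0_iff by blast
  ultimately have "l x = 1 / card K" if "x \<in> K" for x
    using that by (simp add: field_simps)
  then show "\<forall>x\<in>K. l x = 1 / card K" by blast
qed

section \<open>The trace chain on \<open>K\<close>\<close>

lemma hit_matrix_nonneg: "0 \<le> hit_matrix P B K x y"
  by (simp add: hit_matrix_def)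

lemma hit_matrix_mono_set:
  fixes P :: "'a::countable \<Rightarrow> 'a \<Rightarrow> real"
  assumes "stochastic_matrix P" "finite K" "y \<in> K" "B \<subseteq> B'"
  shows "hit_matrix P B K x y \<le> hit_matrix P B' K x y"
proof -
  have "ennreal (hit_matrix P B K x y) \<le> ennreal (hit_matrix P B' K x y)"
    unfolding ennreal_hit_matrix[OF assms(1-3)] by (rule killed_reward_mono_set[OF assms(4)])
  then show ?thesis by (simp add: hit_matrix_nonneg)
qed

lemma hit_matrix_tendsto:
  fixes P :: "'a::countable \<Rightarrow> 'a \<Rightarrow> real"
  assumes "stochastic_matrix P" "finite K" "y \<in> K" "incseq B" "(\<Union>n. B n) = UNIV"
  shows "(\<lambda>n. hit_matrix P (B n) K x y) \<longlonglongrightarrow> hit_matrix P UNIV K x y"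
proof -
  have "(\<lambda>n. ennreal (hit_matrix P (B n) K x y)) \<longlonglongrightarrow> ennreal (hit_matrix P UNIV K x y)"
    unfolding ennreal_hit_matrix[OF assms(1-3)] by (rule killed_reward_tendsto[OF assms(4,5)])
  then show ?thesis by (simp add: tendsto_ennreal_iff hit_matrix_nonneg)
qed

definition h_transform :: "('a \<Rightarrow> 'a \<Rightarrow> real) \<Rightarrow> real \<Rightarrow> ('a \<Rightarrow> real) \<Rightarrow> 'a \<Rightarrow> 'a \<Rightarrow> real" where
  "h_transform G lam h x y = G x y * h y / (lam * h x)"

lemma stationary_on_h_transform:
  assumes "lam \<noteq> 0" "\<And>x. x \<in> K \<Longrightarrow> 0 < \<nu> x" "\<And>x. x \<in> K \<Longrightarrow> 0 < h x"
    and "\<And>y. y \<in> K \<Longrightarrow> (\<Sum>x\<in>K. \<nu> x * G x y) = lam * \<nu> y"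
    and "(\<Sum>x\<in>K. \<nu> x * h x) = 1"
  shows "stationary_on K (h_transform G lam h) (\<lambda>x. \<nu> x * h x)"
proof -
  have "\<nu> x * h x * h_transform G lam h x y = \<nu> x * G x y * h y / lam" if "x \<in> K" for x y
    using assms(3)[OF that] by (simp add: h_transform_def)
  then have "(\<Sum>x\<in>K. \<nu> x * h x * h_transform G lam h x y) = (\<Sum>x\<in>K. \<nu> x * G x y) * h y / lam" for y
    by (simp add: sum_distrib_right sum_divide_distrib)
  then show ?thesis
    using assms by (simp add: stationary_on_def less_imp_le)
qed

lemma h_transform_scale:
  assumes "c \<noteq> 0"
  shows "h_transform G lam (\<lambda>x. h x / c) = h_transform G lam h"
  using assms by (auto simp: h_transform_def fun_eq_iff)

locale trace_chain = irreducible_stationary_chain +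
  fixes K :: "'a set"
  assumes finite_K: "finite K" and K_nonempty: "K \<noteq> {}"
begin

abbreviation trace_matrix :: "'a \<Rightarrow> 'a \<Rightarrow> real" where
  "trace_matrix \<equiv> hit_matrix P UNIV K"

lemma trace_matrix_stationary:
  assumes "y \<in> K"
  shows "(\<Sum>x\<in>K. \<pi> x * trace_matrix x y) = \<pi> y"
proof -
  have "ennreal (\<Sum>x\<in>K. \<pi> x * trace_matrix x y) =
        (\<Sum>x\<in>K. ennreal (\<pi> x) * killed_reward P UNIV K (\<lambda>z. P z y) x)"
    by (simp add: ennreal_hit_matrix[OF stochastic finite_K assms, symmetric] ennreal_mult
        stationary_nonneg hit_matrix_nonneg flip: sum_ennreal)
  also have "\<dots> = (\<integral>\<^sup>+z. ennreal (\<pi> z) * ennreal (P z y) \<partial>count_space UNIV)"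
    by (rule cycle_formula[OF finite_K K_nonempty])
  finally show ?thesis
    by (simp add: stationary_invariant sum_nonneg stationary_nonneg hit_matrix_nonneg)
qed

lemma trace_matrix_row_sum:
  assumes "x \<in> K"
  shows "(\<Sum>y\<in>K. trace_matrix x y) = 1"
proof -
  have row_le: "(\<Sum>y\<in>K. trace_matrix u y) \<le> 1" for u
  proof -
    have "ennreal (\<Sum>y\<in>K. trace_matrix u y) = (\<Sum>y\<in>K. killed_reward P UNIV K (\<lambda>z. P z y) u)"
      by (simp add: ennreal_hit_matrix[OF stochastic finite_K, symmetric] hit_matrix_nonneg
          flip: sum_ennreal)
    also have "\<dots> \<le> 1" by (rule hit_row_sum_le_1[OF stochastic finite_K])
    finally show ?thesis by (simp only: ennreal_le_1)
  qed
  text \<open>The defects of the row sums average to zero under \<open>\<pi>\<close>, which is positive.\<close>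
  have "(\<Sum>u\<in>K. \<pi> u * (1 - (\<Sum>y\<in>K. trace_matrix u y))) =
        (\<Sum>u\<in>K. \<pi> u) - (\<Sum>u\<in>K. \<Sum>y\<in>K. \<pi> u * trace_matrix u y)"
    by (simp add: right_diff_distrib sum_subtractf sum_distrib_left)
  also have "(\<Sum>u\<in>K. \<Sum>y\<in>K. \<pi> u * trace_matrix u y) = (\<Sum>y\<in>K. \<Sum>u\<in>K. \<pi> u * trace_matrix u y)"
    by (rule sum.swap)
  also have "\<dots> = (\<Sum>u\<in>K. \<pi> u)"
    by (simp add: trace_matrix_stationary)
  finally have sum_0: "(\<Sum>u\<in>K. \<pi> u * (1 - (\<Sum>y\<in>K. trace_matrix u y))) = 0" by simp
  have "0 \<le> \<pi> u * (1 - (\<Sum>y\<in>K. trace_matrix u y))" if "u \<in> K" for u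
    using row_le by (intro mult_nonneg_nonneg stationary_nonneg) simp
  then have "\<pi> x * (1 - (\<Sum>y\<in>K. trace_matrix x y)) = 0"
    using sum_0 assms by (simp add: sum_nonneg_eq_0_iff[OF finite_K])
  then show ?thesis using stationary_pos[of x] by simp
qed

definition trace_dist :: "'a \<Rightarrow> real" where
  "trace_dist x = \<pi> x / (\<Sum>y\<in>K. \<pi> y)"

lemma stationary_mass_K_pos: "0 < (\<Sum>y\<in>K. \<pi> y)"
  using finite_K K_nonempty stationary_pos by (simp add: sum_pos)

lemma trace_dist_pos: "0 < trace_dist x"
  using stationary_pos stationary_mass_K_pos by (simp add: trace_dist_def)

lemma stationary_on_trace_dist: "stationary_on K trace_matrix trace_dist"
  using trace_dist_pos stationary_mass_K_pos
  by (simp add: stationary_on_def trace_dist_def less_imp_le trace_matrix_stationary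
      sum_divide_distrib[symmetric])

lemma killed_reward_average_tendsto:
  assumes B: "incseq B" "(\<Union>n. B n) = UNIV"
    and \<mu>: "\<And>x. x \<in> K \<Longrightarrow> (\<lambda>n. \<mu> n x) \<longlonglongrightarrow> trace_dist x"
  shows "(\<lambda>n. \<Sum>x\<in>K. ennreal (\<mu> n x) * killed_reward P (B n) K f x) \<longlonglongrightarrow>
      ennreal (1 / (\<Sum>y\<in>K. \<pi> y)) * (\<integral>\<^sup>+z. ennreal (\<pi> z) * ennreal (f z) \<partial>count_space UNIV)"
proof -
  have "(\<lambda>n. \<Sum>x\<in>K. ennreal (\<mu> n x) * killed_reward P (B n) K f x) \<longlonglongrightarrow>
      (\<Sum>x\<in>K. ennreal (trace_dist x) * killed_reward P UNIV K f x)"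
    using \<mu> killed_reward_tendsto[OF B]
    by (intro tendsto_sum tendsto_mult_ennreal tendsto_ennrealI)
      (auto simp: ennreal_eq_0_iff trace_dist_pos[folded not_le])
  also have "(\<Sum>x\<in>K. ennreal (trace_dist x) * killed_reward P UNIV K f x) =
      ennreal (1 / (\<Sum>y\<in>K. \<pi> y)) * (\<Sum>x\<in>K. ennreal (\<pi> x) * killed_reward P UNIV K f x)"
    by (simp add: trace_dist_def sum_distrib_left ennreal_mult' stationary_nonneg divide_inverse
        ac_simps)
  finally show ?thesis by (simp add: cycle_formula[OF finite_K K_nonempty])
qed

lemma tilde_pi_tendsto:
  assumes B: "incseq B" "(\<Union>n. B n) = UNIV"
    and \<mu>: "\<And>x. x \<in> K \<Longrightarrow> (\<lambda>n. \<mu> n x) \<longlonglongrightarrow> trace_dist x"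
    and "\<And>x. 0 \<le> r x"
  shows "(\<lambda>n. tilde_pi P (B n) K (\<mu> n) r) \<longlonglongrightarrow> (\<integral>\<^sup>+x. ennreal (\<pi> x * r x) \<partial>count_space UNIV)"
proof -
  define S where "S = (\<Sum>y\<in>K. \<pi> y)"
  have S: "0 < S" unfolding S_def by (rule stationary_mass_K_pos)
  have "(\<lambda>n. \<Sum>x\<in>K. ennreal (\<mu> n x) * killed_time P (B n) K x) \<longlonglongrightarrow> ennreal (1 / S)"
    using killed_reward_average_tendsto[OF B \<mu>, of "\<lambda>_. 1"]
    by (simp add: killed_time_def stationary_mass S_def)
  moreover have "continuous_on UNIV (inverse :: ennreal \<Rightarrow> ennreal)"
    by (intro continuous_on_inverse_ennreal continuous_on_id)
  ultimately have "(\<lambda>n. inverse (\<Sum>x\<in>K. ennreal (\<mu> n x) * killed_time P (B n) K x))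
      \<longlonglongrightarrow> inverse (ennreal (1 / S))"
    by (intro continuous_on_tendsto_compose[where f=inverse]) auto
  then have "(\<lambda>n. inverse (\<Sum>x\<in>K. ennreal (\<mu> n x) * killed_time P (B n) K x)) \<longlonglongrightarrow> ennreal S"
    using S by (simp add: inverse_ennreal)
  then have "(\<lambda>n. tilde_pi P (B n) K (\<mu> n) r) \<longlonglongrightarrow>
      ennreal (1 / S) * (\<integral>\<^sup>+z. ennreal (\<pi> z) * ennreal (r z) \<partial>count_space UNIV) * ennreal S"
    unfolding tilde_pi_def divide_ennreal_def
    by (intro tendsto_mult_ennreal killed_reward_average_tendsto[OF B \<mu>, of r, folded S_def])
      (use S in auto)
  moreover have "ennreal (1 / S) * L * ennreal S = L" for L
  proof -
    have "ennreal (1 / S) * ennreal S = 1" using S by (simp add: ennreal_mult[symmetric])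
    then show ?thesis by (metis mult.assoc mult.commute mult_1)
  qed
  ultimately show ?thesis
    by (simp add: ennreal_mult stationary_nonneg assms(4))
qed

end

locale exhausted_trace_chain = trace_chain +
  fixes B :: "nat \<Rightarrow> 'a set"
  assumes incseq_B: "incseq B" and Union_B: "(\<Union>n. B n) = UNIV"
    and irreducible_B: "\<And>n. irreducible_on K (hit_matrix P (B n) K)"
begin

lemma hit_matrix_tendsto_trace:
  "y \<in> K \<Longrightarrow> (\<lambda>n. hit_matrix P (B n) K x y) \<longlonglongrightarrow> trace_matrix x y"
  using hit_matrix_tendsto[OF stochastic finite_K _ incseq_B Union_B] .

lemma trace_matrix_irreducible: "irreducible_on K trace_matrix"
  by (rule irreducible_on_mono[OF irreducible_B[of 0]])
    (simp add: hit_matrix_mono_set[OF stochastic finite_K])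

lemma row_sum_tendsto_1:
  assumes "x \<in> K"
  shows "(\<lambda>n. \<Sum>y\<in>K. hit_matrix P (B n) K x y) \<longlonglongrightarrow> 1"
proof -
  have "(\<lambda>n. \<Sum>y\<in>K. hit_matrix P (B n) K x y) \<longlonglongrightarrow> (\<Sum>y\<in>K. trace_matrix x y)"
    by (intro tendsto_sum hit_matrix_tendsto_trace)
  then show ?thesis using trace_matrix_row_sum[OF assms] by simp
qed

lemma row_normalize_stationary_tendsto:
  assumes "\<And>n. stationary_on K (row_normalize K (hit_matrix P (B n) K)) (p n)" "x \<in> K"
  shows "(\<lambda>n. p n x) \<longlonglongrightarrow> trace_dist x"
proof (rule stationary_on_tendsto[OF finite_K trace_matrix_irreducible stationary_on_trace_dist
      _ _ assms])
  show "(\<lambda>n. row_normalize K (hit_matrix P (B n) K) u y) \<longlonglongrightarrow> trace_matrix u y"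
    if "u \<in> K" "y \<in> K" for u y
    using tendsto_divide[OF hit_matrix_tendsto_trace row_sum_tendsto_1] that
    by (simp add: row_normalize_def)
qed (simp add: trace_dist_pos)

lemma perron_right_eigenvector_tendsto:
  assumes lam: "lam \<longlonglongrightarrow> 1" and h_pos: "\<And>n x. x \<in> K \<Longrightarrow> 0 < h n x"
    and h_eig: "\<And>n x. x \<in> K \<Longrightarrow> (\<Sum>y\<in>K. hit_matrix P (B n) K x y * h n y) = lam n * h n x"
    and "x \<in> K"
  shows "(\<lambda>n. h n x / (\<Sum>y\<in>K. h n y)) \<longlonglongrightarrow> 1 / card K"
proof (rule normalized_right_eigenvector_tendsto[OF finite_K trace_matrix_irreducible _
      hit_matrix_tendsto_trace lam _ _ _ assms(4)])
  have h_sum: "0 < (\<Sum>y\<in>K. h n y)" for n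
    using finite_K K_nonempty h_pos by (simp add: sum_pos)
  show "\<forall>x\<in>K. (\<Sum>y\<in>K. trace_matrix x y) = 1" by (simp add: trace_matrix_row_sum)
  show "0 \<le> h n x / (\<Sum>y\<in>K. h n y)" if "x \<in> K" for n x
    using h_pos[OF that, of n] h_sum[of n] by (intro divide_nonneg_pos) simp_all
  show "(\<Sum>x\<in>K. h n x / (\<Sum>y\<in>K. h n y)) = 1" for n
    using h_sum[of n] by (simp flip: sum_divide_distrib)
  show "(\<Sum>y\<in>K. hit_matrix P (B n) K x y * (h n y / (\<Sum>y\<in>K. h n y))) =
      lam n * (h n x / (\<Sum>y\<in>K. h n y))" if "x \<in> K" for n x
    using h_eig[OF that] by (simp add: sum_divide_distrib[symmetric])
qed

text \<open>The transform is unchanged by normalising \<open>h n\<close>, which tends to the uniform vector.\<close>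
lemma perron_stationary_tendsto:
  assumes lam_pos: "\<And>n. 0 < lam n"
    and \<nu>_pos: "\<And>n x. x \<in> K \<Longrightarrow> 0 < \<nu> n x" and h_pos: "\<And>n x. x \<in> K \<Longrightarrow> 0 < h n x"
    and \<nu>_eig: "\<And>n y. y \<in> K \<Longrightarrow> (\<Sum>x\<in>K. \<nu> n x * hit_matrix P (B n) K x y) = lam n * \<nu> n y"
    and h_eig: "\<And>n x. x \<in> K \<Longrightarrow> (\<Sum>y\<in>K. hit_matrix P (B n) K x y * h n y) = lam n * h n x"
    and norm: "\<And>n. (\<Sum>x\<in>K. \<nu> n x * h n x) = 1"
    and "x \<in> K"
  shows "(\<lambda>n. \<nu> n x * h n x) \<longlonglongrightarrow> trace_dist x"
proof (rule stationary_on_tendsto[OF finite_K trace_matrix_irreducible stationary_on_trace_dist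
      _ _ _ assms(7)])
  show "stationary_on K (h_transform (hit_matrix P (B n) K) (lam n) (h n)) (\<lambda>x. \<nu> n x * h n x)"
    for n using lam_pos[of n] \<nu>_pos h_pos \<nu>_eig norm by (intro stationary_on_h_transform) auto
  have lam: "lam \<longlonglongrightarrow> 1"
    using left_eigenvalue_tendsto_1[OF finite_K K_nonempty row_sum_tendsto_1 \<nu>_pos \<nu>_eig] .
  define \<eta> where "\<eta> n x = h n x / (\<Sum>y\<in>K. h n y)" for n x
  have "h_transform (hit_matrix P (B n) K) (lam n) (h n) = h_transform (hit_matrix P (B n) K) (lam n) (\<eta> n)"
    for n
  proof -
    have "0 < (\<Sum>y\<in>K. h n y)" by (rule sum_pos[OF finite_K K_nonempty h_pos])
    then show ?thesis unfolding \<eta>_def by (simp add: h_transform_scale)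
  qed
  moreover have "(\<lambda>n. h_transform (hit_matrix P (B n) K) (lam n) (\<eta> n) u y) \<longlonglongrightarrow>
      trace_matrix u y * (1 / card K) / (1 * (1 / card K))" if "u \<in> K" "y \<in> K" for u y
    unfolding h_transform_def \<eta>_def using that
    by (intro tendsto_divide tendsto_mult hit_matrix_tendsto_trace lam
        perron_right_eigenvector_tendsto[OF lam h_pos h_eig])
      (simp_all add: finite_K K_nonempty card_gt_0_iff)
  ultimately show "(\<lambda>n. h_transform (hit_matrix P (B n) K) (lam n) (h n) u y) \<longlonglongrightarrow> trace_matrix u y"
    if "u \<in> K" "y \<in> K" for u y
    using that finite_K K_nonempty by simp
qed (simp add: trace_dist_pos)

end

lemma incseq_Union_Suc:
  assumes "\<And>n. n \<ge> 1 \<Longrightarrow> A n \<subseteq> A (Suc n)" "(\<Union>n\<in>{1..}. A n) = UNIV"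
  shows "incseq (\<lambda>n. A (Suc n))" "(\<Union>n. A (Suc n)) = UNIV"
proof -
  show "incseq (\<lambda>n. A (Suc n))" by (rule incseq_SucI) (use assms(1) in auto)
  have "x \<in> (\<Union>n. A (Suc n))" for x
  proof -
    obtain n where "1 \<le> n" "x \<in> A n" using assms(2) by blast
    then show ?thesis by (auto intro: exI[of _ "n - 1"])
  qed
  then show "(\<Union>n. A (Suc n)) = UNIV" by blast
qed

theorem proposition2p4:
  fixes P :: "'a::countable \<Rightarrow> 'a \<Rightarrow> real"
    and \<pi> :: "'a \<Rightarrow> real"
    and K :: "'a set"
    and A :: "nat \<Rightarrow> 'a set"
    and r :: "'a \<Rightarrow> real"
    and lam :: "nat \<Rightarrow> real"
    and \<nu> h :: "nat \<Rightarrow> 'a \<Rightarrow> real"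
    and \<pi>2 :: "nat \<Rightarrow> 'a \<Rightarrow> real"
  assumes stoch: "stochastic_matrix P"
    and irr: "irreducible_chain P"
    and posrec: "positive_recurrent P"
    and stat: "stationary_dist P \<pi>"
    and K: "finite K" "K \<noteq> {}"
    and A_fin: "\<And>n. n \<ge> 1 \<Longrightarrow> finite (A n)"
    and A_K: "\<And>n. n \<ge> 1 \<Longrightarrow> K \<subseteq> A n"
    and A_mono: "\<And>n. n \<ge> 1 \<Longrightarrow> A n \<subseteq> A (Suc n)"
    and A_union: "(\<Union>n\<in>{1..}. A n) = UNIV"
    and G_irr: "\<And>n. n \<ge> 1 \<Longrightarrow> irreducible_on K (hit_matrix P (A n) K)"
    and lam_pos: "\<And>n. n \<ge> 1 \<Longrightarrow> lam n > 0"
    and \<nu>_pos: "\<And>n x. n \<ge> 1 \<Longrightarrow> x \<in> K \<Longrightarrow> \<nu> n x > 0"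
    and h_pos: "\<And>n x. n \<ge> 1 \<Longrightarrow> x \<in> K \<Longrightarrow> h n x > 0"
    and \<nu>_eig: "\<And>n y. n \<ge> 1 \<Longrightarrow> y \<in> K \<Longrightarrow>
        (\<Sum>x\<in>K. \<nu> n x * hit_matrix P (A n) K x y) = lam n * \<nu> n y"
    and h_eig: "\<And>n x. n \<ge> 1 \<Longrightarrow> x \<in> K \<Longrightarrow>
        (\<Sum>y\<in>K. hit_matrix P (A n) K x y * h n y) = lam n * h n x"
    and norm: "\<And>n. n \<ge> 1 \<Longrightarrow> (\<Sum>x\<in>K. \<nu> n x * h n x) = 1"
    and \<pi>2_stat: "\<And>n. n \<ge> 1 \<Longrightarrow>
        stationary_on K (row_normalize K (hit_matrix P (A n) K)) (\<pi>2 n)"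
    and r_nonneg: "\<And>x. r x \<ge> 0"
  shows "((\<lambda>n. tilde_pi P (A n) K (\<lambda>x. \<nu> n x * h n x) r)
           \<longlonglongrightarrow> (\<integral>\<^sup>+ x. ennreal (\<pi> x * r x) \<partial>count_space UNIV)) \<and>
         ((\<lambda>n. tilde_pi P (A n) K (\<pi>2 n) r)
           \<longlonglongrightarrow> (\<integral>\<^sup>+ x. ennreal (\<pi> x * r x) \<partial>count_space UNIV))"
proof -
  interpret exhausted_trace_chain P \<pi> K "\<lambda>n. A (Suc n)"
    using stoch irr stat K G_irr incseq_Union_Suc[OF A_mono A_union] by unfold_locales auto
  have "(\<lambda>n. tilde_pi P (A (Suc n)) K (\<lambda>x. \<nu> (Suc n) x * h (Suc n) x) r)
      \<longlonglongrightarrow> (\<integral>\<^sup>+ x. ennreal (\<pi> x * r x) \<partial>count_space UNIV)"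
    by (intro tilde_pi_tendsto[OF incseq_B Union_B _ r_nonneg]
        perron_stationary_tendsto[where lam="\<lambda>n. lam (Suc n)"])
      (auto intro!: lam_pos \<nu>_pos h_pos \<nu>_eig h_eig norm)
  moreover have "(\<lambda>n. tilde_pi P (A (Suc n)) K (\<pi>2 (Suc n)) r)
      \<longlonglongrightarrow> (\<integral>\<^sup>+ x. ennreal (\<pi> x * r x) \<partial>count_space UNIV)"
    by (intro tilde_pi_tendsto[OF incseq_B Union_B _ r_nonneg] row_normalize_stationary_tendsto)
      (auto intro!: \<pi>2_stat)
  ultimately show ?thesis
    using LIMSEQ_imp_Suc[of "\<lambda>n. tilde_pi P (A n) K (\<lambda>x. \<nu> n x * h n x) r"]
      LIMSEQ_imp_Suc[of "\<lambda>n. tilde_pi P (A n) K (\<pi>2 n) r"]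
    by simp
qed

end
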